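(* Let $\pi\in S_n$. For every $k\in\{1,\dots,n\}$, $(c_k,d_k)\in\beta_\pi$ if and only if $k$ is the largest element of the $\pi$-segment containing $k$.
   Context: $G$ is the direct product of chains $0=c_0\prec\dots\prec c_n$ and $0=d_0\prec\dots\prec d_n$, elements written $c_i\vee d_j$. For $\pi\in S_n$, $\beta_\pi$ is the join, in the lattice of join-congruences (equivalences compatible with $\vee$) of $(G;\vee)$, of the smallest join-congruences collapsing $\{c_{i-1}\vee d_{\pi(i)},c_i\vee d_{\pi(i)-1},c_i\vee d_{\pi(i)}\}$, $i=1,\dots,n$. For $\sigma\in S_n$, a set $I$ is closed if $\sigma(I)\subseteq I$; a nonempty interval $\{u,\dots,v\}$ of $\{1<\dots<n\}$ is a $\sigma$-section if it, $\{1,\dots,u-1\}$ and $\{v+1,\dots,n\}$ are closed; minimal $\sigma$-sections are $\sigma$-segments, and they partition $\{1,\dots,n\}$. *)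

theory Defs
  imports "HOL-Combinatorics.Permutations"
begin

text \<open>The grid G = chain {0..n} x chain {0..n}; the element c_i \<or> d_j is the pair (i,j),
  so c_i = (i,0), d_j = (0,j) and join is componentwise max.\<close>

definition grid :: "nat \<Rightarrow> (nat \<times> nat) set" where
  "grid n = {0..n} \<times> {0..n}"

definition gjoin :: "nat \<times> nat \<Rightarrow> nat \<times> nat \<Rightarrow> nat \<times> nat" where
  "gjoin x y = (max (fst x) (fst y), max (snd x) (snd y))"

definition join_congruence :: "nat \<Rightarrow> (nat \<times> nat) rel \<Rightarrow> bool" where
  "join_congruence n \<theta> \<longleftrightarrow> equiv (grid n) \<theta> \<and>
     (\<forall>x y z. (x, y) \<in> \<theta> \<longrightarrow> z \<in> grid n \<longrightarrow> (gjoin x z, gjoin y z) \<in> \<theta>)"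

definition triple :: "(nat \<Rightarrow> nat) \<Rightarrow> nat \<Rightarrow> (nat \<times> nat) set" where
  "triple \<pi> i = {(i - 1, \<pi> i), (i, \<pi> i - 1), (i, \<pi> i)}"

text \<open>beta_pi: the join of the smallest join-congruences collapsing each triple, i.e. the
  smallest join-congruence collapsing all triples (intersection of all such).\<close>
definition beta :: "nat \<Rightarrow> (nat \<Rightarrow> nat) \<Rightarrow> (nat \<times> nat) rel" where
  "beta n \<pi> = \<Inter> {\<theta>. join_congruence n \<theta> \<and>
                       (\<forall>i\<in>{1..n}. triple \<pi> i \<times> triple \<pi> i \<subseteq> \<theta>)}"

definition closed_set :: "(nat \<Rightarrow> nat) \<Rightarrow> nat set \<Rightarrow> bool" where
  "closed_set \<sigma> I \<longleftrightarrow> \<sigma> ` I \<subseteq> I"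

definition sigma_section :: "nat \<Rightarrow> (nat \<Rightarrow> nat) \<Rightarrow> nat set \<Rightarrow> bool" where
  "sigma_section n \<sigma> S \<longleftrightarrow> (\<exists>u v. 1 \<le> u \<and> u \<le> v \<and> v \<le> n \<and> S = {u..v} \<and>
       closed_set \<sigma> {u..v} \<and> closed_set \<sigma> {1..<u} \<and> closed_set \<sigma> {v+1..n})"

definition segment :: "nat \<Rightarrow> (nat \<Rightarrow> nat) \<Rightarrow> nat set \<Rightarrow> bool" where
  "segment n \<sigma> S \<longleftrightarrow> sigma_section n \<sigma> S \<and> (\<forall>T. sigma_section n \<sigma> T \<and> T \<subseteq> S \<longrightarrow> T = S)"

end

theory Submission
  imports Defs "HOL-Library.Product_Order"
begin

(*
  Both sides say that pi maps the prefix {1..k} into itself. For the segments this holds because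
  the sigma-sections are exactly the intervals {u..v} whose prefixes {1..u-1} and {1..v} are
  closed. For beta_pi: if the prefix is closed, the triples with i <= k, joined with suitable
  elements, give chains of collapsed covering pairs from d_k up to c_k v d_k and from c_k up to
  c_k v d_k. Otherwise some j > k has pi j <= k, and splitting G into the principal ideal of
  c_(j-1) v d_(pi j - 1) and its complement is a join-congruence that collapses every triple but
  separates c_k from d_k.
*)

lemma inj_invariant_compl:
  assumes "inj f" "finite A" "f ` A \<subseteq> A" "x \<notin> A"
  shows "f x \<notin> A"
proof
  assume "f x \<in> A"
  moreover have "A = f ` A"
    using endo_inj_surj[OF assms(2,3) inj_on_subset[OF assms(1)]] by simp
  ultimately show False
    using assms(1,4) by (auto dest: injD)
qed

lemma image_Diff_subset_of_invariant:
  assumes "inj f" "finite A" "f ` A \<subseteq> A" "f ` B \<subseteq> B"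
  shows "f ` (B - A) \<subseteq> B - A"
  using inj_invariant_compl[OF assms(1-3)] assms(4) by blast

lemma bij_not_invariant_obtains:
  assumes "bij f" "finite A" "\<not> f ` A \<subseteq> A"
  obtains x where "x \<notin> A" "f x \<in> A"
proof (rule ccontr)
  assume "\<not> thesis"
  with that have preimage_in: "f x \<in> A \<Longrightarrow> x \<in> A" for x by blast
  have "A \<subseteq> f ` A"
  proof
    fix a assume "a \<in> A"
    moreover have "f (inv f a) = a" by (rule surj_f_inv_f[OF bij_is_surj[OF assms(1)]])
    ultimately show "a \<in> f ` A" using preimage_in by (metis imageI)
  qed
  moreover have "card A = card (f ` A)"
    using card_image[OF inj_on_subset[OF bij_is_inj[OF assms(1)]]] by simp
  ultimately have "A = f ` A"
    using card_subset_eq[OF finite_imageI[OF assms(2)]] by blast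
  with assms(3) show False by simp
qed

lemma sigma_section_iff_closed_prefixes:
  assumes "\<pi> permutes {1..n}"
  shows "sigma_section n \<pi> S \<longleftrightarrow> (\<exists>u v. S = {u..v} \<and> 1 \<le> u \<and> u \<le> v \<and> v \<le> n \<and>
           closed_set \<pi> {1..u-1} \<and> closed_set \<pi> {1..v})"
proof -
  have inj: "inj \<pi>" using assms permutes_inj by blast
  have all: "\<pi> ` {1..n} \<subseteq> {1..n}" using assms permutes_image by blast
  have "closed_set \<pi> {u..v} \<and> closed_set \<pi> {1..<u} \<and> closed_set \<pi> {v+1..n} \<longleftrightarrow>
        closed_set \<pi> {1..u-1} \<and> closed_set \<pi> {1..v}" if "1 \<le> u" "u \<le> v" "v \<le> n" for u v
  proof -
    have "{1..<u} = {1..u-1}" "{1..v} = {1..u-1} \<union> {u..v}"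
      and "{u..v} = {1..v} - {1..u-1}" "{v+1..n} = {1..n} - {1..v}"
      using that by auto
    then show ?thesis
      using image_Diff_subset_of_invariant[OF inj finite_atLeastAtMost] all
      unfolding closed_set_def by (smt (verit) image_Un sup.mono)
  qed
  then show ?thesis
    unfolding sigma_section_def by blast
qed

lemma closed_prefix_if_segment_Max:
  assumes "\<pi> permutes {1..n}" "segment n \<pi> S" "k = Max S"
  shows "closed_set \<pi> {1..k}"
proof -
  obtain u v where "S = {u..v}" "u \<le> v" "closed_set \<pi> {1..v}"
    using assms(2) unfolding segment_def sigma_section_iff_closed_prefixes[OF assms(1)] by blast
  moreover from this have "Max S = v" by (auto intro: Max_eqI)
  ultimately show ?thesis using assms(3) by simp
qed

lemma segment_Max_if_closed_prefix:
  assumes \<pi>: "\<pi> permutes {1..n}" and k: "k \<in> {1..n}" and closed_k: "closed_set \<pi> {1..k}"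
  shows "\<exists>S. segment n \<pi> S \<and> k \<in> S \<and> k = Max S"
proof -
  define M where "M = {m. m < k \<and> closed_set \<pi> {1..m}}"
  define w where "w = Max M"
  have "0 \<in> M" using k unfolding M_def closed_set_def by auto
  moreover have "finite M" unfolding M_def by auto
  ultimately have "w \<in> M" and w_max: "\<And>m. m \<in> M \<Longrightarrow> m \<le> w"
    unfolding w_def by (auto intro: Max_in)
  then have "w < k" "closed_set \<pi> {1..w}" unfolding M_def by auto
  define S where "S = {w+1..k}"
  have is_section: "sigma_section n \<pi> S"
    unfolding sigma_section_iff_closed_prefixes[OF \<pi>] S_def
    using \<open>w < k\<close> \<open>closed_set \<pi> {1..w}\<close> k closed_k by auto
  have "T = S" if T: "sigma_section n \<pi> T" "T \<subseteq> S" for T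
  proof -
    obtain u v where uv: "T = {u..v}" "1 \<le> u" "u \<le> v"
      "closed_set \<pi> {1..u-1}" "closed_set \<pi> {1..v}"
      using T(1) unfolding sigma_section_iff_closed_prefixes[OF \<pi>] by blast
    have "w + 1 \<le> u" "v \<le> k" using T(2) uv(1,3) unfolding S_def by auto
    moreover have "u - 1 \<le> w" using uv w_max[of "u - 1"] \<open>v \<le> k\<close> unfolding M_def by simp
    moreover have "v = k"
      using uv w_max[of v] \<open>v \<le> k\<close> \<open>w + 1 \<le> u\<close> unfolding M_def by fastforce
    ultimately have "u = w + 1" "v = k" by linarith+
    then show "T = S" using uv(1) unfolding S_def by simp
  qed
  then have "segment n \<pi> S" using is_section unfolding segment_def by blast
  moreover have "k \<in> S" "k = Max S"
    using \<open>w < k\<close> unfolding S_def by (auto intro!: Max_eqI[symmetric])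
  ultimately show ?thesis by blast
qed

lemma beta_subset:
  assumes "join_congruence n \<theta>" "\<forall>i\<in>{1..n}. triple \<pi> i \<times> triple \<pi> i \<subseteq> \<theta>"
  shows "beta n \<pi> \<subseteq> \<theta>"
  using assms unfolding beta_def by blast

lemma equiv_chain:
  assumes "equiv A \<theta>" "f 0 \<in> A" "\<And>j. j < m \<Longrightarrow> (f j, f (Suc j)) \<in> \<theta>"
  shows "(f 0, f m) \<in> \<theta>"
  using assms(3)
proof (induction m)
  case 0
  show ?case using assms(1,2) unfolding equiv_def refl_on_def by blast
next
  case (Suc m)
  then show ?case using assms(1) by (meson equiv_def less_Suc_eq transD)
qed

lemma join_congruence_collapses_diagonal_pair:
  assumes cong: "join_congruence n \<theta>" and triples: "\<forall>i\<in>{1..n}. triple \<pi> i \<times> triple \<pi> i \<subseteq> \<theta>"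
    and \<pi>: "\<pi> permutes {1..n}" and k: "k \<in> {1..n}" and closed_k: "closed_set \<pi> {1..k}"
  shows "((k, 0), (0, k)) \<in> \<theta>"
proof -
  have equiv: "equiv (grid n) \<theta>"
    and compat: "\<And>x y z. (x, y) \<in> \<theta> \<Longrightarrow> z \<in> grid n \<Longrightarrow> (gjoin x z, gjoin y z) \<in> \<theta>"
    using cong unfolding join_congruence_def by blast+
  have image_k: "\<pi> ` {1..k} = {1..k}"
    using closed_k endo_inj_surj[OF _ _ inj_on_subset[OF permutes_inj[OF \<pi>]]]
    unfolding closed_set_def by blast
  have collapsed: "(x, y) \<in> \<theta>" if "i \<in> {1..n}" "x \<in> triple \<pi> i" "y \<in> triple \<pi> i" for i x y
    using triples that by blast
  have "((j, k), (Suc j, k)) \<in> \<theta>" if "j < k" for j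
  proof -
    have "\<pi> (Suc j) \<le> k" using image_k that by auto
    have "((j, \<pi> (Suc j)), (Suc j, \<pi> (Suc j))) \<in> \<theta>"
      using collapsed[of "Suc j" "(j, \<pi> (Suc j))" "(Suc j, \<pi> (Suc j))"] that k
      by (simp add: triple_def)
    from compat[OF this, of "(0, k)"] show ?thesis
      using \<open>\<pi> (Suc j) \<le> k\<close> k by (simp add: grid_def gjoin_def)
  qed
  then have horizontal: "((0, k), (k, k)) \<in> \<theta>"
    using equiv_chain[OF equiv, of "\<lambda>j. (j, k)"] k by (simp add: grid_def)
  have "((k, j), (k, Suc j)) \<in> \<theta>" if "j < k" for j
  proof -
    have "Suc j \<in> \<pi> ` {1..k}" using image_k that by simp
    then obtain i where i: "i \<in> {1..k}" "\<pi> i = Suc j" by (metis imageE)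
    then have "((i, j), (i, Suc j)) \<in> \<theta>"
      using collapsed[of i "(i, \<pi> i - 1)" "(i, \<pi> i)"] k by (simp add: triple_def)
    from compat[OF this, of "(k, 0)"] show ?thesis
      using i k by (simp add: grid_def gjoin_def)
  qed
  then have vertical: "((k, 0), (k, k)) \<in> \<theta>"
    using equiv_chain[OF equiv, of "\<lambda>j. (k, j)"] k by (simp add: grid_def)
  from equiv have "sym \<theta>" "trans \<theta>" by (auto elim: equivE)
  then show ?thesis
    using vertical horizontal by (blast dest: symD transD)
qed

(* The kernel of the join-homomorphism x |-> (x is not below a) into the two-element semilattice. *)
definition below_congruence :: "nat \<Rightarrow> nat \<times> nat \<Rightarrow> (nat \<times> nat) rel" where
  "below_congruence n a = {(x, y). x \<in> grid n \<and> y \<in> grid n \<and> (x \<le> a \<longleftrightarrow> y \<le> a)}"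

lemma join_congruence_below_congruence: "join_congruence n (below_congruence n a)"
  unfolding join_congruence_def below_congruence_def
  by (auto intro!: equivI simp: refl_on_def sym_def trans_def grid_def gjoin_def less_eq_prod_def)

lemma triple_collapsed_by_below_congruence:
  assumes \<pi>: "\<pi> permutes {1..n}" and i: "i \<in> {1..n}" and j: "j \<in> {1..n}"
  shows "triple \<pi> i \<times> triple \<pi> i \<subseteq> below_congruence n (j - 1, \<pi> j - 1)"
proof -
  have "\<pi> i \<in> {1..n}" "\<pi> j \<in> {1..n}" using i j permutes_in_image[OF \<pi>] by auto
  moreover have "i = j \<longleftrightarrow> \<pi> i = \<pi> j" using permutes_inj[OF \<pi>] by (meson injD)
  ultimately show ?thesis
    using i j by (auto simp: triple_def below_congruence_def grid_def less_eq_prod_def)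
qed

lemma closed_prefix_if_diagonal_pair_in_beta:
  assumes \<pi>: "\<pi> permutes {1..n}" and k: "k \<in> {1..n}" and mem: "((k, 0), (0, k)) \<in> beta n \<pi>"
  shows "closed_set \<pi> {1..k}"
proof (rule ccontr)
  assume "\<not> closed_set \<pi> {1..k}"
  then obtain j where j: "j \<notin> {1..k}" "\<pi> j \<in> {1..k}"
    using bij_not_invariant_obtains[OF permutes_bij[OF \<pi>]] unfolding closed_set_def by blast
  then have j_n: "j \<in> {1..n}" using k permutes_not_in[OF \<pi>] by fastforce
  then have "beta n \<pi> \<subseteq> below_congruence n (j - 1, \<pi> j - 1)"
    using beta_subset join_congruence_below_congruence triple_collapsed_by_below_congruence[OF \<pi>]
    by blast
  with mem j j_n show False by (auto simp: below_congruence_def less_eq_prod_def)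
qed

theorem lemma4p3:
  fixes n :: nat and \<pi> :: "nat \<Rightarrow> nat" and k :: nat
  assumes "\<pi> permutes {1..n}"
    and "k \<in> {1..n}"
  shows "((k, 0), (0, k)) \<in> beta n \<pi> \<longleftrightarrow>
         (\<exists>S. segment n \<pi> S \<and> k \<in> S \<and> k = Max S)"
proof
  assume "((k, 0), (0, k)) \<in> beta n \<pi>"
  then show "\<exists>S. segment n \<pi> S \<and> k \<in> S \<and> k = Max S"
    using assms closed_prefix_if_diagonal_pair_in_beta segment_Max_if_closed_prefix by blast
next
  assume "\<exists>S. segment n \<pi> S \<and> k \<in> S \<and> k = Max S"
  then have "closed_set \<pi> {1..k}" using assms(1) closed_prefix_if_segment_Max by blast
  then show "((k, 0), (0, k)) \<in> beta n \<pi>"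
    unfolding beta_def using join_congruence_collapses_diagonal_pair[OF _ _ assms] by blast
qed

end
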